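(* Let the standing assumptions (listed in the context) hold. Let $(x_k)$ have a cluster point $x^*$ such that $\mathcal{J}|_{\mathcal{N}}$ is $\kappa$-strongly convex, where $\mathcal{N}\subset\Omega$ is a convex neighborhood of $x^*$. Then 1) $\mathcal{J}(x^* )+\kappa\|x-x^*\|^2\le\mathcal{J}(x)$ for all $x\in\mathcal{N}$; 2) the iterates $(x_k)$ converge r-linearly to $x^*$; 3) the gradients $(\nabla\mathcal{J}(x_k))$ converge r-linearly to zero; 4) the function values $(\mathcal{J}(x_k))$ converge q-linearly to $\mathcal{J}(x^* )$; specifically, if $\bar k$ is such that $x_k\in\mathcal{N}$ for all $k\ge\bar k$, then $\mathcal{J}(x_{k+1})-\mathcal{J}(x^* )\le\left(1-\frac{2\sigma\alpha_k\kappa}{\|B_k\|}\right)[\mathcal{J}(x_k)-\mathcal{J}(x^* )]$ for all $k\ge\bar k$, and the supremum of the term in round brackets is strictly smaller than 1.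
   Context: Let $\mathcal{X}$ be a Hilbert space and $\mathcal{J}:\mathcal{X}\to\mathbb{R}$. Algorithm SLBFGS (structured inverse L-BFGS): inputs $x_0\in\mathcal{X}$, $\epsilon\geq0$, $\ell\in\mathbb{N}_0$, $c_0\geq 0$, $C_0\in[c_0,\infty]$, $c_s,c_1,c_2>0$; let $\tau_0>0$. For $k=0,1,2,\ldots$: let $m=\max\{0,k-\ell\}$; choose a symmetric positive semi-definite bounded linear operator $S_k$; set $B_k^{(0)}=\tau_k I+S_k$; let $B_k$ be obtained from $B_k^{(0)}$ and the currently stored pairs $(s_j,y_j)$, $m\le j\le k-1$, by successive L-BFGS updates $B\mapsto B+\frac{yy^T}{y^Ts}-\frac{Bss^TB}{s^TBs}$; set $d_k=-B_k^{-1}\nabla\mathcal{J}(x_k)$; compute a step length $\alpha_k>0$ by a line search; set $s_k=\alpha_kd_k$, $x_{k+1}=x_k+s_k$, $y_k=\nabla\mathcal{J}(x_{k+1})-\nabla\mathcal{J}(x_k)$; store $(s_k,y_k)$ only if $y_k^Ts_k>c_s\|s_k\|^2$; if $k\ge\ell$ remove $(s_m,y_m)$ from storage; stop with output $x_{k+1}$ if $\|\nabla\mathcal{J}(x_{k+1})\|\le\epsilon$; set $z_k=y_k-S_{k+1}s_k$, $\omega^l_{k+1}=\min\{c_0,c_1\|\nabla\mathcal{J}(x_{k+1})\|^{c_2}\}$, $\omega^u_{k+1}=\max\{C_0,(c_1\|\nabla\mathcal{J}(x_{k+1})\|^{c_2})^{-1}\}$; with $P(t)=\min\{\max\{t,\omega^l_{k+1}\},\omega^u_{k+1}\}$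 and $\rho=z_k^Ts_k$ let $\tau^s=P(\rho/\|s_k\|^2)$, $\tau^g=P(\|z_k\|/\|s_k\|)$, $\tau^z=P(\|z_k\|^2/\rho)$; if $\rho>0$ choose $\tau_{k+1}\in[\tau^s,\tau^z]$, else choose $\tau_{k+1}\in[\tau^s,\tau^g]$. Line searches: Armijo with backtracking means, for fixed $\beta,\sigma\in(0,1)$, $\alpha_k$ is the largest number in $\{1,\beta,\beta^2,\ldots\}$ with $\mathcal{J}(x_{k+1})\le\mathcal{J}(x_k)+\alpha_k\sigma\nabla\mathcal{J}(x_k)^Td_k$; the Wolfe–Powell conditions are this Armijo inequality together with $\nabla\mathcal{J}(x_{k+1})^Td_k\ge\eta\nabla\mathcal{J}(x_k)^Td_k$ for fixed $\eta\in(\sigma,1)$. Let $\Omega=\{x:\mathcal{J}(x)\le\mathcal{J}(x_0)\}$. Standing assumptions: 1) $\mathcal{J}$ is continuously differentiable and bounded below; 2) $\nabla\mathcal{J}$ is Lipschitz continuous on $\Omega$ with constant $L>0$; 3) $(\|S_k\|)$ is bounded; 4) the step sizes consistently satisfy the Armijo condition computed by backtracking, or consistently satisfy the Wolfe–Powell conditions (no uniform continuity assumption on a neighborhood of $\Omega$ is required); 5) $c_0=0$ is only chosen if then $\sup_k\|(B_k^{(0)})^{-1}\|<\infty$; 6) $C_0=\infty$ is only chosen if either the interval $[\tau^s,\tau^z]$ is replaced by $[\tau^s,\tau^g]$, or $\mathcal{J}$ is twice continuously differentiable, $\int_0^1\nabla^2\mathcal{J}(x_k+ts_k)\,dt-S_{k+1}$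 is symmetric positive semi-definite for all $k$ with bounded norms; 7) the algorithm is run with $\epsilon=0$ and generates an infinite sequence $(x_k)$; 8) $(\|B_k\|)$ and $(\|B_k^{-1}\|)$ are bounded. *)

theory Defs
  imports "HOL-Analysis.Analysis"
begin

definition sym_psd :: "('a::real_inner \<Rightarrow>\<^sub>L 'a) \<Rightarrow> bool" where
  "sym_psd A \<longleftrightarrow> (\<forall>u v. A u \<bullet> v = u \<bullet> A v) \<and> (\<forall>u. 0 \<le> A u \<bullet> u)"

definition lbfgs_update :: "('a::real_inner \<Rightarrow>\<^sub>L 'a) \<Rightarrow> 'a \<Rightarrow> 'a \<Rightarrow> ('a \<Rightarrow>\<^sub>L 'a)" where
  "lbfgs_update B s y = B + Blinfun (\<lambda>v. ((y \<bullet> v) / (y \<bullet> s)) *\<^sub>R y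
                                      - ((s \<bullet> B v) / (s \<bullet> B s)) *\<^sub>R B s)"

definition step_s :: "(nat \<Rightarrow> 'a::real_vector) \<Rightarrow> nat \<Rightarrow> 'a" where
  "step_s x k = x (Suc k) - x k"

definition step_y :: "('a \<Rightarrow> 'b::real_vector) \<Rightarrow> (nat \<Rightarrow> 'a) \<Rightarrow> nat \<Rightarrow> 'b" where
  "step_y G x k = G (x (Suc k)) - G (x k)"

definition B0 :: "(nat \<Rightarrow> ('a::real_normed_vector \<Rightarrow>\<^sub>L 'a)) \<Rightarrow> (nat \<Rightarrow> real) \<Rightarrow> nat \<Rightarrow> ('a \<Rightarrow>\<^sub>L 'a)" where
  "B0 S \<tau> k = \<tau> k *\<^sub>R id_blinfun + S k"

text \<open>Indices j, m \<le> j \<le> k-1 (m = max 0 (k - l)), whose pairs are stored at iteration k: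
  exactly those satisfying the curvature test  y_j^T s_j > c_s ||s_j||^2.\<close>
definition stored :: "('a::real_inner \<Rightarrow> 'a) \<Rightarrow> (nat \<Rightarrow> 'a) \<Rightarrow> nat \<Rightarrow> real \<Rightarrow> nat \<Rightarrow> nat list" where
  "stored G x l cs k =
     filter (\<lambda>j. step_y G x j \<bullet> step_s x j > cs * (norm (step_s x j))\<^sup>2) [k - l..<k]"

definition Bop :: "('a::real_inner \<Rightarrow> 'a) \<Rightarrow> (nat \<Rightarrow> 'a) \<Rightarrow> nat \<Rightarrow> real
     \<Rightarrow> (nat \<Rightarrow> ('a \<Rightarrow>\<^sub>L 'a)) \<Rightarrow> (nat \<Rightarrow> real) \<Rightarrow> nat \<Rightarrow> ('a \<Rightarrow>\<^sub>L 'a)" where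
  "Bop G x l cs S \<tau> k =
     foldl (\<lambda>B j. lbfgs_update B (step_s x j) (step_y G x j)) (B0 S \<tau> k) (stored G x l cs k)"

definition Pproj :: "real \<Rightarrow> ereal \<Rightarrow> real \<Rightarrow> real" where
  "Pproj wl wu t = real_of_ereal (min (ereal (max t wl)) wu)"

definition tau_rule ::
  "('a::real_inner \<Rightarrow> 'a) \<Rightarrow> (nat \<Rightarrow> 'a) \<Rightarrow> (nat \<Rightarrow> ('a \<Rightarrow>\<^sub>L 'a)) \<Rightarrow> real \<Rightarrow> ereal
    \<Rightarrow> real \<Rightarrow> real \<Rightarrow> bool \<Rightarrow> nat \<Rightarrow> real \<Rightarrow> bool" where
  "tau_rule G x S c0 C0 c1 c2 use_g k t \<longleftrightarrow>
     (let s = step_s x k; z = step_y G x k - S (Suc k) s;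
          gn = norm (G (x (Suc k)));
          wl = min c0 (c1 * gn powr c2);
          wu = max C0 (ereal (inverse (c1 * gn powr c2)));
          \<rho> = z \<bullet> s;
          ts = Pproj wl wu (\<rho> / (norm s)\<^sup>2);
          tg = Pproj wl wu (norm z / norm s);
          tz = Pproj wl wu ((norm z)\<^sup>2 / \<rho>)
      in if \<rho> > 0 \<and> \<not> use_g then ts \<le> t \<and> t \<le> tz else ts \<le> t \<and> t \<le> tg)"

definition armijo :: "('a::real_inner \<Rightarrow> real) \<Rightarrow> ('a \<Rightarrow> 'a) \<Rightarrow> (nat \<Rightarrow> 'a) \<Rightarrow> (nat \<Rightarrow> 'a)
    \<Rightarrow> real \<Rightarrow> nat \<Rightarrow> real \<Rightarrow> bool" where
  "armijo J G x d \<sigma> k a \<longleftrightarrow> J (x k + a *\<^sub>R d k) \<le> J (x k) + a * \<sigma> * (G (x k) \<bullet> d k)"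

definition armijo_backtracking where
  "armijo_backtracking J G x d \<sigma> \<beta> \<alpha> k \<longleftrightarrow>
     (\<exists>i::nat. \<alpha> k = \<beta> ^ i \<and> armijo J G x d \<sigma> k (\<beta> ^ i)
               \<and> (\<forall>j<i. \<not> armijo J G x d \<sigma> k (\<beta> ^ j)))"

definition wolfe_powell where
  "wolfe_powell J G x d \<sigma> \<eta> \<alpha> k \<longleftrightarrow>
     armijo J G x d \<sigma> k (\<alpha> k) \<and> G (x k + \<alpha> k *\<^sub>R d k) \<bullet> d k \<ge> \<eta> * (G (x k) \<bullet> d k)"

text \<open>An infinite run of SLBFGS with epsilon = 0 (never stopping).  Binv k is the inverse
  of B_k, d_k = - B_k^{-1} grad J(x_k), x_{k+1} = x_k + alpha_k d_k.\<close>
definition slbfgs_run ::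
  "('a::{real_inner,complete_space} \<Rightarrow> real) \<Rightarrow> ('a \<Rightarrow> 'a) \<Rightarrow> 'a \<Rightarrow> nat \<Rightarrow> real \<Rightarrow> ereal
    \<Rightarrow> real \<Rightarrow> real \<Rightarrow> real \<Rightarrow> bool \<Rightarrow> (nat \<Rightarrow> ('a \<Rightarrow>\<^sub>L 'a)) \<Rightarrow> (nat \<Rightarrow> real)
    \<Rightarrow> (nat \<Rightarrow> ('a \<Rightarrow>\<^sub>L 'a)) \<Rightarrow> (nat \<Rightarrow> real) \<Rightarrow> (nat \<Rightarrow> 'a) \<Rightarrow> bool" where
  "slbfgs_run J G x0 l c0 C0 cs c1 c2 use_g S \<tau> Binv \<alpha> x \<longleftrightarrow>
     0 \<le> c0 \<and> ereal c0 \<le> C0 \<and> cs > 0 \<and> c1 > 0 \<and> c2 > 0 \<and>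
     x 0 = x0 \<and> \<tau> 0 > 0 \<and>
     (\<forall>k. sym_psd (S k)) \<and>
     (\<forall>k v. Binv k (Bop G x l cs S \<tau> k v) = v \<and> Bop G x l cs S \<tau> k (Binv k v) = v) \<and>
     (\<forall>k. \<alpha> k > 0) \<and>
     (\<forall>k. x (Suc k) = x k + \<alpha> k *\<^sub>R (- Binv k (G (x k)))) \<and>
     (\<forall>k. norm (G (x (Suc k))) > 0) \<and>
     (\<forall>k. tau_rule G x S c0 C0 c1 c2 use_g k (\<tau> (Suc k)))"

text \<open>kappa-strong convexity (convention matching conclusion 1).\<close>
definition strongly_convex_on :: "'a::real_normed_vector set \<Rightarrow> ('a \<Rightarrow> real) \<Rightarrow> real \<Rightarrow> bool" where
  "strongly_convex_on N J \<kappa> \<longleftrightarrow> convex N \<and>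
     (\<forall>x\<in>N. \<forall>y\<in>N. \<forall>t\<in>{0..1}.
        J (t *\<^sub>R x + (1 - t) *\<^sub>R y) \<le> t * J x + (1 - t) * J y - \<kappa> * t * (1 - t) * (norm (x - y))\<^sup>2)"

definition r_linear_conv :: "(nat \<Rightarrow> 'a::real_normed_vector) \<Rightarrow> 'a \<Rightarrow> bool" where
  "r_linear_conv a L \<longleftrightarrow> (\<exists>C q. 0 < q \<and> q < 1 \<and> (\<forall>k. norm (a k - L) \<le> C * q ^ k))"

definition q_linear_conv :: "(nat \<Rightarrow> real) \<Rightarrow> real \<Rightarrow> bool" where
  "q_linear_conv a L \<longleftrightarrow> (\<exists>q K. 0 \<le> q \<and> q < 1 \<and> (\<forall>k\<ge>K. \<bar>a (Suc k) - L\<bar> \<le> q * \<bar>a k - L\<bar>))"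

end

theory Submission
  imports Defs
begin

text \<open>The L-BFGS update preserves symmetric positive semi-definiteness under the curvature
  test, so every \<open>B\<^sub>k\<close> is positive semi-definite and
  \<open>\<parallel>\<nabla>J(x\<^sub>k)\<parallel>\<^sup>2 \<le> \<parallel>B\<^sub>k\<parallel> \<nabla>J(x\<^sub>k)\<bullet>B\<^sub>k\<^sup>-\<^sup>1\<nabla>J(x\<^sub>k)\<close>. Both line searches keep the step sizes away
  from zero, because the gradient is Lipschitz on the level set, so the Armijo inequality yields
  a decrease of \<open>J\<close> proportional to \<open>\<parallel>\<nabla>J(x\<^sub>k)\<parallel>\<^sup>2\<close>; hence the gradient vanishes at the cluster
  point \<open>x\<^sup>*\<close>. Near \<open>x\<^sup>*\<close>, strong convexity gives quadratic growth and the Polyak-Lojasiewicz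
  inequality \<open>4\<kappa>(J(x) - J(x\<^sup>*)) \<le> \<parallel>\<nabla>J(x)\<parallel>\<^sup>2\<close>, which turns the Armijo decrease into the
  contraction factor \<open>1 - 2\<sigma>\<alpha>\<^sub>k\<kappa>/\<parallel>B\<^sub>k\<parallel>\<close>. The same inequality bounds the steps near \<open>x\<^sup>*\<close> by a
  multiple of the gradient, so the iterates eventually stay in \<open>N\<close>. The q-linear decay of
  \<open>J(x\<^sub>k) - J(x\<^sup>*)\<close> then gives r-linear convergence of the iterates through quadratic growth, and
  of the gradients through the Lipschitz bound.\<close>

section \<open>Symmetric positive semi-definite operators and the L-BFGS update\<close>

lemma nonneg_quadratic_imp_discrim_le:
  fixes a b c :: real
  assumes quad: "\<And>t. 0 \<le> a * t\<^sup>2 + 2 * b * t + c" and "0 \<le> a"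
  shows "b\<^sup>2 \<le> a * c"
proof (cases "a = 0")
  case True
  have "b = 0"
  proof (rule ccontr)
    assume "b \<noteq> 0"
    with quad[of "- (c + 1) / (2 * b)"] True show False by (simp add: field_simps)
  qed
  with True show ?thesis by simp
next
  case False
  with \<open>0 \<le> a\<close> have "0 < a" by simp
  with quad[of "- b / a"] show ?thesis by (simp add: field_simps power2_eq_square)
qed

lemma sym_psd_Cauchy_Schwarz:
  assumes "sym_psd A"
  shows "(A u \<bullet> v)\<^sup>2 \<le> (A v \<bullet> v) * (A u \<bullet> u)"
proof (rule nonneg_quadratic_imp_discrim_le)
  have sym: "\<And>u v. A u \<bullet> v = u \<bullet> A v" and pos: "\<And>u. 0 \<le> A u \<bullet> u"
    using assms unfolding sym_psd_def by auto
  show "0 \<le> A v \<bullet> v" by (rule pos)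
  fix t
  have "0 \<le> A (u + t *\<^sub>R v) \<bullet> (u + t *\<^sub>R v)" by (rule pos)
  then show "0 \<le> (A v \<bullet> v) * t\<^sup>2 + 2 * (A u \<bullet> v) * t + A u \<bullet> u"
    using sym[of v u]
    by (simp add: blinfun.add_right blinfun.scaleR_right inner_add_left inner_add_right
        inner_commute power2_eq_square algebra_simps)
qed

lemma sym_psd_norm_apply_sq_le:
  assumes "sym_psd A"
  shows "(norm (A u))\<^sup>2 \<le> norm A * (A u \<bullet> u)"
proof -
  have pos: "0 \<le> A u \<bullet> u" using assms unfolding sym_psd_def by auto
  have "A (A u) \<bullet> A u \<le> norm (A (A u)) * norm (A u)" by (rule norm_cauchy_schwarz)
  also have "\<dots> \<le> norm A * (norm (A u))\<^sup>2"
    using mult_right_mono[OF norm_blinfun[of A "A u"] norm_ge_zero[of "A u"]]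
    by (simp add: power2_eq_square mult.assoc)
  finally have AAu: "A (A u) \<bullet> A u \<le> norm A * (norm (A u))\<^sup>2" .
  have "(norm (A u))\<^sup>2 * (norm (A u))\<^sup>2 = (A u \<bullet> A u)\<^sup>2"
    unfolding power2_norm_eq_inner by (simp add: power2_eq_square)
  also have "\<dots> \<le> (A (A u) \<bullet> A u) * (A u \<bullet> u)" by (rule sym_psd_Cauchy_Schwarz[OF assms])
  also have "\<dots> \<le> (norm A * (A u \<bullet> u)) * (norm (A u))\<^sup>2"
    using mult_right_mono[OF AAu pos] by (simp add: algebra_simps)
  finally have sq_le: "(norm (A u))\<^sup>2 * (norm (A u))\<^sup>2 \<le> (norm A * (A u \<bullet> u)) * (norm (A u))\<^sup>2" .
  show ?thesis
  proof (cases "A u = 0")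
    case False
    with mult_right_le_imp_le[OF sq_le] show ?thesis by simp
  qed simp
qed

lemma sym_psd_inverse_gradient_bound:
  assumes "sym_psd B" "\<And>v. B (H v) = v"
  shows "(norm g)\<^sup>2 \<le> norm B * (g \<bullet> H g)"
  using sym_psd_norm_apply_sq_le[OF assms(1), of "H g"] assms(2) by (simp add: inner_commute)

lemma lbfgs_update_apply:
  "lbfgs_update B s y v = B v + ((y \<bullet> v) / (y \<bullet> s)) *\<^sub>R y - ((s \<bullet> B v) / (s \<bullet> B s)) *\<^sub>R B s"
proof -
  have "bounded_linear (\<lambda>v. ((y \<bullet> v) / (y \<bullet> s)) *\<^sub>R y - ((s \<bullet> B v) / (s \<bullet> B s)) *\<^sub>R B s)"
    by (intro bounded_linear_sub bounded_linear_scaleR_const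
        bounded_linear_compose[OF bounded_linear_divide] bounded_linear_inner_right
        bounded_linear_compose[OF bounded_linear_inner_right] blinfun.bounded_linear_right)
  then show ?thesis
    unfolding lbfgs_update_def by (simp add: bounded_linear_Blinfun_apply blinfun.add_left)
qed

lemma sym_psd_lbfgs_update:
  assumes "sym_psd B" "0 < y \<bullet> s"
  shows "sym_psd (lbfgs_update B s y)"
proof -
  have sym: "\<And>u v. B u \<bullet> v = u \<bullet> B v" and pos: "\<And>u. 0 \<le> B u \<bullet> u"
    using assms(1) unfolding sym_psd_def by auto
  have "lbfgs_update B s y u \<bullet> v = u \<bullet> lbfgs_update B s y v" for u v
    using sym[of s u] sym[of s v] sym[of u v]
    by (simp add: lbfgs_update_apply inner_diff_left inner_diff_right inner_add_left
        inner_add_right inner_commute algebra_simps)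
  moreover have "0 \<le> lbfgs_update B s y v \<bullet> v" for v
  proof -
    have "(s \<bullet> B v)\<^sup>2 \<le> (s \<bullet> B s) * (B v \<bullet> v)"
      using sym_psd_Cauchy_Schwarz[OF assms(1), of v s] sym[of s s] sym[of v s]
      by (simp add: inner_commute)
    then have "(s \<bullet> B v)\<^sup>2 / (s \<bullet> B s) \<le> B v \<bullet> v"
      using pos[of s] sym[of s s] pos[of v]
      by (cases "s \<bullet> B s = 0") (auto simp: divide_le_eq mult.commute)
    moreover have "0 \<le> (y \<bullet> v)\<^sup>2 / (y \<bullet> s)" using assms(2) by simp
    moreover have "lbfgs_update B s y v \<bullet> v
        = B v \<bullet> v + (y \<bullet> v)\<^sup>2 / (y \<bullet> s) - (s \<bullet> B v)\<^sup>2 / (s \<bullet> B s)"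
      using sym[of s v]
      by (simp add: lbfgs_update_apply inner_diff_left inner_add_left inner_diff_right
          inner_add_right power2_eq_square inner_commute)
    ultimately show ?thesis by linarith
  qed
  ultimately show ?thesis unfolding sym_psd_def by auto
qed

lemma sym_psd_foldl_lbfgs_update:
  assumes "sym_psd B" "\<And>j. j \<in> set js \<Longrightarrow> 0 < y j \<bullet> s j"
  shows "sym_psd (foldl (\<lambda>B j. lbfgs_update B (s j) (y j)) B js)"
  using assms by (induction js arbitrary: B) (auto simp: sym_psd_lbfgs_update)

lemma sym_psd_B0:
  assumes "sym_psd (S k)" "0 \<le> \<tau> k"
  shows "sym_psd (B0 S \<tau> k)"
  using assms unfolding sym_psd_def B0_def
  by (auto simp: blinfun.add_left blinfun.scaleR_left inner_add_left inner_add_right inner_commute)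

lemma sym_psd_Bop:
  assumes "sym_psd (S k)" "0 \<le> \<tau> k" "0 < cs"
  shows "sym_psd (Bop G x l cs S \<tau> k)"
  unfolding Bop_def
proof (rule sym_psd_foldl_lbfgs_update[OF sym_psd_B0[of S k \<tau>, OF assms(1,2)]])
  fix j assume "j \<in> set (stored G x l cs k)"
  then have "cs * (norm (step_s x j))\<^sup>2 < step_y G x j \<bullet> step_s x j"
    unfolding stored_def by auto
  moreover have "0 \<le> cs * (norm (step_s x j))\<^sup>2" using assms(3) by simp
  ultimately show "0 < step_y G x j \<bullet> step_s x j" by linarith
qed

section \<open>Line searches\<close>

lemma has_real_derivative_along_line:
  assumes "\<And>v. (J has_derivative (\<lambda>h. G v \<bullet> h)) (at v)"
  shows "((\<lambda>t. J (x + t *\<^sub>R d)) has_real_derivative (G (x + t *\<^sub>R d) \<bullet> d)) (at t)"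
proof -
  have "((\<lambda>t. x + t *\<^sub>R d) has_derivative (\<lambda>h. h *\<^sub>R d)) (at t)"
    by (auto intro!: derivative_eq_intros)
  from diff_chain_at[OF this assms]
  show ?thesis unfolding has_field_derivative_def by (simp add: o_def mult_commute_abs)
qed

lemma first_nonneg_point:
  fixes \<phi> :: "real \<Rightarrow> real"
  assumes "continuous_on {a..b} \<phi>" "a \<le> b" "0 \<le> \<phi> b"
  obtains t where "a \<le> t" "t \<le> b" "0 \<le> \<phi> t" "\<And>s. a \<le> s \<Longrightarrow> s < t \<Longrightarrow> \<phi> s < 0"
proof -
  define E where "E = \<phi> -` {0..} \<inter> {a..b}"
  have "closed E" unfolding E_def by (rule closed_vimage_Int) (use assms(1) in auto)
  moreover have "b \<in> E" "bdd_below E" using assms(2,3) unfolding E_def by auto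
  ultimately have "Inf E \<in> E" using closed_contains_Inf by blast
  moreover have "\<phi> s < 0" if "a \<le> s" "s < Inf E" for s
  proof (rule ccontr)
    assume "\<not> \<phi> s < 0"
    with that \<open>Inf E \<in> E\<close> have "s \<in> E" unfolding E_def by auto
    then have "Inf E \<le> s" using \<open>bdd_below E\<close> by (rule cInf_lower)
    with that show False by simp
  qed
  ultimately show ?thesis using that unfolding E_def by auto
qed

lemma armijo_violation_curvature_point:
  fixes J :: "'a::real_inner \<Rightarrow> real"
  assumes grad: "\<And>v. (J has_derivative (\<lambda>h. G v \<bullet> h)) (at v)"
    and descent: "G x \<bullet> d < 0" and \<sigma>: "0 \<le> \<sigma>" "\<sigma> < 1" and "0 < t0"
    and violation: "J x + t0 * \<sigma> * (G x \<bullet> d) < J (x + t0 *\<^sub>R d)"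
  obtains z where "0 < z" "z \<le> t0" "J (x + z *\<^sub>R d) \<le> J x" "\<sigma> * (G x \<bullet> d) \<le> G (x + z *\<^sub>R d) \<bullet> d"
proof -
  define \<phi> where "\<phi> t = J (x + t *\<^sub>R d) - J x - t * (\<sigma> * (G x \<bullet> d))" for t
  have D\<phi>: "(\<phi> has_real_derivative (G (x + t *\<^sub>R d) \<bullet> d - \<sigma> * (G x \<bullet> d))) (at t)" for t
    unfolding \<phi>_def
    by (auto intro!: derivative_eq_intros has_real_derivative_along_line[OF grad])
  have "(\<phi> has_real_derivative (G x \<bullet> d - \<sigma> * (G x \<bullet> d))) (at 0)" using D\<phi>[of 0] by simp
  moreover have "G x \<bullet> d - \<sigma> * (G x \<bullet> d) < 0"
    using descent \<sigma> mult_pos_neg[of "1 - \<sigma>" "G x \<bullet> d"] by (simp add: algebra_simps)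
  ultimately obtain \<delta> where "0 < \<delta>" and "\<forall>h>0. h < \<delta> \<longrightarrow> \<phi> (0 + h) < \<phi> 0"
    by (blast dest: DERIV_neg_dec_right)
  then have \<phi>_neg: "\<And>h. 0 < h \<Longrightarrow> h < \<delta> \<Longrightarrow> \<phi> h < 0" by (simp add: \<phi>_def)
  define a where "a = min (\<delta> / 2) t0"
  have a: "0 < a" "a < \<delta>" "a \<le> t0" using \<open>0 < \<delta>\<close> \<open>0 < t0\<close> unfolding a_def by auto
  have "continuous_on {a..t0} \<phi>"
    using D\<phi> by (meson DERIV_isCont continuous_at_imp_continuous_on)
  moreover have "0 \<le> \<phi> t0" using violation unfolding \<phi>_def by (simp add: algebra_simps)
  ultimately obtain t1 where t1: "a \<le> t1" "t1 \<le> t0" "0 \<le> \<phi> t1"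
    and before: "\<And>s. a \<le> s \<Longrightarrow> s < t1 \<Longrightarrow> \<phi> s < 0"
    using first_nonneg_point[of a t0 \<phi>] a by blast
  from a t1 obtain z where z: "0 < z" "z < t1"
      "\<phi> t1 - \<phi> 0 = t1 * (G (x + z *\<^sub>R d) \<bullet> d - \<sigma> * (G x \<bullet> d))"
    using MVT2[of 0 t1 \<phi> "\<lambda>t. G (x + t *\<^sub>R d) \<bullet> d - \<sigma> * (G x \<bullet> d)"] D\<phi> by auto
  have "\<phi> z < 0" using z a by (cases "z < a") (auto intro: \<phi>_neg before)
  then have "J (x + z *\<^sub>R d) \<le> J x"
    using z descent \<sigma> mult_nonneg_nonpos[of "z * \<sigma>" "G x \<bullet> d"] unfolding \<phi>_def
    by (simp add: algebra_simps)
  moreover have "\<sigma> * (G x \<bullet> d) \<le> G (x + z *\<^sub>R d) \<bullet> d"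
    using z t1 a unfolding \<phi>_def by (simp add: zero_le_mult_iff)
  ultimately show ?thesis using that z t1 by simp
qed

lemma curvature_step_bound:
  assumes lip: "norm (G (x + t *\<^sub>R d) - G x) \<le> L * norm (t *\<^sub>R d)" and "0 \<le> t"
    and curvature: "\<eta> * (G x \<bullet> d) \<le> G (x + t *\<^sub>R d) \<bullet> d"
  shows "(1 - \<eta>) * - (G x \<bullet> d) \<le> L * t * (norm d)\<^sup>2"
proof -
  have "(1 - \<eta>) * - (G x \<bullet> d) \<le> (G (x + t *\<^sub>R d) - G x) \<bullet> d"
    using curvature by (simp add: inner_diff_left algebra_simps)
  also have "\<dots> \<le> norm (G (x + t *\<^sub>R d) - G x) * norm d" by (rule norm_cauchy_schwarz)
  also have "\<dots> \<le> L * t * (norm d)\<^sup>2"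
    using mult_right_mono[OF lip norm_ge_zero[of d]] \<open>0 \<le> t\<close>
    by (simp add: power2_eq_square mult.assoc)
  finally show ?thesis .
qed

lemma curvature_step_lower_bound:
  assumes "norm (G (x + t *\<^sub>R d) - G x) \<le> L * norm (t *\<^sub>R d)" "0 \<le> t"
    and "\<eta> * (G x \<bullet> d) \<le> G (x + t *\<^sub>R d) \<bullet> d" "\<eta> < 1"
    and descent: "0 < - (G x \<bullet> d)" and gradient_related: "(norm d)\<^sup>2 \<le> M * - (G x \<bullet> d)"
    and "0 \<le> L"
  shows "(1 - \<eta>) / (L * M) \<le> t"
proof -
  have "(1 - \<eta>) * - (G x \<bullet> d) \<le> (t * (L * M)) * - (G x \<bullet> d)"
    using curvature_step_bound[OF assms(1-3)] mult_left_mono[OF gradient_related, of "L * t"]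
      \<open>0 \<le> L\<close> \<open>0 \<le> t\<close> by (simp add: algebra_simps)
  then have "1 - \<eta> \<le> t * (L * M)" using descent by simp
  moreover have "0 < t * (L * M)" using calculation \<open>\<eta> < 1\<close> by linarith
  then have "0 < L * M" using \<open>0 \<le> t\<close> by (simp add: zero_less_mult_iff)
  ultimately show ?thesis by (simp add: divide_le_eq)
qed

lemma armijo_backtracking_step_lower_bound:
  fixes J :: "'a::real_inner \<Rightarrow> real"
  assumes grad: "\<And>v. (J has_derivative (\<lambda>h. G v \<bullet> h)) (at v)"
    and lip: "\<And>u v. J u \<le> c \<Longrightarrow> J v \<le> c \<Longrightarrow> norm (G u - G v) \<le> L * norm (u - v)"
    and "J (x k) \<le> c" "0 \<le> L" "0 < \<beta>" "\<beta> < 1" "0 \<le> \<sigma>" "\<sigma> < 1"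
    and descent: "0 < - (G (x k) \<bullet> d k)"
    and gradient_related: "(norm (d k))\<^sup>2 \<le> M * - (G (x k) \<bullet> d k)"
    and backtracking: "armijo_backtracking J G x d \<sigma> \<beta> \<alpha> k"
  shows "min 1 (\<beta> * (1 - \<sigma>) / (L * M)) \<le> \<alpha> k"
proof -
  obtain i where \<alpha>: "\<alpha> k = \<beta> ^ i" and rejected: "\<And>j. j < i \<Longrightarrow> \<not> armijo J G x d \<sigma> k (\<beta> ^ j)"
    using backtracking unfolding armijo_backtracking_def by blast
  show ?thesis
  proof (cases i)
    case 0
    with \<alpha> show ?thesis by simp
  next
    case (Suc j)
    with rejected[of j]
    have "J (x k) + \<beta> ^ j * \<sigma> * (G (x k) \<bullet> d k) < J (x k + \<beta> ^ j *\<^sub>R d k)"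
      unfolding armijo_def by auto
    with armijo_violation_curvature_point[OF grad] descent \<open>0 \<le> \<sigma>\<close> \<open>\<sigma> < 1\<close> \<open>0 < \<beta>\<close>
    obtain z where z: "0 < z" "z \<le> \<beta> ^ j" "J (x k + z *\<^sub>R d k) \<le> J (x k)"
      and curvature: "\<sigma> * (G (x k) \<bullet> d k) \<le> G (x k + z *\<^sub>R d k) \<bullet> d k"
      by (metis neg_0_less_iff_less zero_less_power)
    have "norm (G (x k + z *\<^sub>R d k) - G (x k)) \<le> L * norm (z *\<^sub>R d k)"
      using lip[of "x k + z *\<^sub>R d k" "x k"] z(3) \<open>J (x k) \<le> c\<close> by simp
    from curvature_step_lower_bound[OF this _ curvature \<open>\<sigma> < 1\<close> descent gradient_related]
    have "(1 - \<sigma>) / (L * M) \<le> \<beta> ^ j" using z \<open>0 \<le> L\<close> by simp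
    then have "\<beta> * (1 - \<sigma>) / (L * M) \<le> \<alpha> k"
      using \<alpha> Suc \<open>0 < \<beta>\<close> mult_left_mono[of "(1 - \<sigma>) / (L * M)" "\<beta> ^ j" \<beta>] by simp
    then show ?thesis by simp
  qed
qed

lemma wolfe_powell_step_lower_bound:
  assumes lip: "norm (G (x k + \<alpha> k *\<^sub>R d k) - G (x k)) \<le> L * norm (\<alpha> k *\<^sub>R d k)"
    and "0 \<le> \<alpha> k" "\<eta> < 1" "0 \<le> L"
    and descent: "0 < - (G (x k) \<bullet> d k)"
    and gradient_related: "(norm (d k))\<^sup>2 \<le> M * - (G (x k) \<bullet> d k)"
    and wolfe: "wolfe_powell J G x d \<sigma> \<eta> \<alpha> k"
  shows "(1 - \<eta>) / (L * M) \<le> \<alpha> k"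
  using wolfe
    curvature_step_lower_bound[OF lip \<open>0 \<le> \<alpha> k\<close> _ \<open>\<eta> < 1\<close> descent gradient_related \<open>0 \<le> L\<close>]
  unfolding wolfe_powell_def by simp

lemma line_search_step_lower_bound:
  fixes J :: "'a::real_inner \<Rightarrow> real"
  assumes gradient: "\<And>v. (J has_derivative (\<lambda>h. G v \<bullet> h)) (at v)"
    and lip: "\<And>u v. J u \<le> c \<Longrightarrow> J v \<le> c \<Longrightarrow> norm (G u - G v) \<le> L * norm (u - v)"
    and level: "\<And>k. J (x k) \<le> c" and "0 < L" "0 < K" "0 < \<sigma>" "\<sigma> < 1"
    and iteration: "\<And>k. x (Suc k) = x k + \<alpha> k *\<^sub>R d k" and \<alpha>_pos: "\<And>k. 0 < \<alpha> k"
    and descent: "\<And>k. 0 < - (G (x k) \<bullet> d k)"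
    and gradient_related: "\<And>k. (norm (d k))\<^sup>2 \<le> K * - (G (x k) \<bullet> d k)"
    and line_search: "(0 < \<beta> \<and> \<beta> < 1 \<and> (\<forall>k. armijo_backtracking J G x d \<sigma> \<beta> \<alpha> k))
           \<or> (\<sigma> < \<eta> \<and> \<eta> < 1 \<and> (\<forall>k. wolfe_powell J G x d \<sigma> \<eta> \<alpha> k))"
  obtains \<alpha>_min where "0 < \<alpha>_min" "\<And>k. \<alpha>_min \<le> \<alpha> k"
  using line_search
proof
  assume "0 < \<beta> \<and> \<beta> < 1 \<and> (\<forall>k. armijo_backtracking J G x d \<sigma> \<beta> \<alpha> k)"
  then have "min 1 (\<beta> * (1 - \<sigma>) / (L * K)) \<le> \<alpha> k" for k
    using armijo_backtracking_step_lower_bound[where x = x and k = k and d = d and M = K,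
        OF gradient lip level _ _ _ _ _ descent gradient_related] \<open>0 < L\<close> \<open>0 < \<sigma>\<close> \<open>\<sigma> < 1\<close>
    by simp
  moreover have "0 < min 1 (\<beta> * (1 - \<sigma>) / (L * K))"
    using \<open>0 < \<beta> \<and> _\<close> \<open>0 < L\<close> \<open>0 < K\<close> \<open>\<sigma> < 1\<close> by simp
  ultimately show ?thesis using that by blast
next
  assume wolfe: "\<sigma> < \<eta> \<and> \<eta> < 1 \<and> (\<forall>k. wolfe_powell J G x d \<sigma> \<eta> \<alpha> k)"
  have "(1 - \<eta>) / (L * K) \<le> \<alpha> k" for k
  proof (rule wolfe_powell_step_lower_bound[where G = G and x = x and d = d and k = k and \<alpha> = \<alpha>
        and M = K, OF _ _ _ _ descent[of k] gradient_related[of k]])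
    show "norm (G (x k + \<alpha> k *\<^sub>R d k) - G (x k)) \<le> L * norm (\<alpha> k *\<^sub>R d k)"
      using lip[OF level[of "Suc k"] level[of k]] iteration[of k] by simp
  qed (use wolfe \<alpha>_pos[of k] \<open>0 < L\<close> in auto)
  moreover have "0 < (1 - \<eta>) / (L * K)" using wolfe \<open>0 < L\<close> \<open>0 < K\<close> by simp
  ultimately show ?thesis using that by blast
qed

section \<open>Strong convexity\<close>

lemma strongly_convex_on_gradient_ineq:
  fixes J :: "'a::real_inner \<Rightarrow> real"
  assumes sconv: "strongly_convex_on N J \<kappa>" and "u \<in> N" "v \<in> N"
    and du: "(J has_derivative (\<lambda>h. g \<bullet> h)) (at u)"
  shows "J u + g \<bullet> (v - u) + \<kappa> * (norm (v - u))\<^sup>2 \<le> J v"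
proof -
  define \<psi> where "\<psi> t = J (u + t *\<^sub>R (v - u))" for t
  have "((\<lambda>t. u + t *\<^sub>R (v - u)) has_derivative (\<lambda>h. h *\<^sub>R (v - u))) (at 0)"
    by (auto intro!: derivative_eq_intros)
  from diff_chain_at[OF this] du
  have "((J \<circ> (\<lambda>t. u + t *\<^sub>R (v - u))) has_derivative (\<lambda>h. g \<bullet> h) \<circ> (\<lambda>h. h *\<^sub>R (v - u))) (at 0)"
    by simp
  moreover have "(\<lambda>h. g \<bullet> h) \<circ> (\<lambda>h. h *\<^sub>R (v - u)) = (*) (g \<bullet> (v - u))"
    by (auto simp: fun_eq_iff)
  ultimately have "(\<psi> has_real_derivative (g \<bullet> (v - u))) (at 0)"
    unfolding has_field_derivative_def \<psi>_def by (simp add: o_def)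
  then have "(\<psi> has_real_derivative (g \<bullet> (v - u))) (at 0 within {0<..})"
    by (rule has_field_derivative_at_within)
  then have slope: "((\<lambda>t. (\<psi> t - \<psi> 0) / t) \<longlongrightarrow> g \<bullet> (v - u)) (at_right 0)"
    unfolding has_field_derivative_iff by simp
  have bound: "((\<lambda>t. J v - J u - \<kappa> * (1 - t) * (norm (v - u))\<^sup>2)
      \<longlongrightarrow> J v - J u - \<kappa> * (1 - 0) * (norm (v - u))\<^sup>2) (at_right 0)"
    by (intro tendsto_intros)
  have "\<forall>\<^sub>F t in at_right 0. (\<psi> t - \<psi> 0) / t \<le> J v - J u - \<kappa> * (1 - t) * (norm (v - u))\<^sup>2"
    unfolding eventually_at_right_field
  proof (intro exI[of _ 1] conjI allI impI)
    fix t :: real assume t: "0 < t" "t < 1"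
    have "J (t *\<^sub>R v + (1 - t) *\<^sub>R u) \<le> t * J v + (1 - t) * J u - \<kappa> * t * (1 - t) * (norm (v - u))\<^sup>2"
      using sconv \<open>u \<in> N\<close> \<open>v \<in> N\<close> t unfolding strongly_convex_on_def by auto
    moreover have "t *\<^sub>R v + (1 - t) *\<^sub>R u = u + t *\<^sub>R (v - u)" by (simp add: algebra_simps)
    ultimately have "\<psi> t - \<psi> 0 \<le> t * (J v - J u - \<kappa> * (1 - t) * (norm (v - u))\<^sup>2)"
      unfolding \<psi>_def by (simp add: algebra_simps)
    then show "(\<psi> t - \<psi> 0) / t \<le> J v - J u - \<kappa> * (1 - t) * (norm (v - u))\<^sup>2"
      using t by (simp add: divide_le_eq mult.commute)
  qed simp
  from tendsto_le[OF trivial_limit_at_right_real bound slope this] show ?thesis by simp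
qed

lemma strongly_convex_on_gradient_dominance:
  fixes J :: "'a::real_inner \<Rightarrow> real"
  assumes sconv: "strongly_convex_on N J \<kappa>" and "u \<in> N" "v \<in> N" "0 < \<kappa>"
    and du: "(J has_derivative (\<lambda>h. g \<bullet> h)) (at u)"
  shows "4 * \<kappa> * (J u - J v) \<le> (norm g)\<^sup>2"
proof -
  define t where "t = norm (v - u)"
  have "- (g \<bullet> (v - u)) \<le> norm g * t"
    using norm_cauchy_schwarz[of "- g" "v - u"] unfolding t_def by simp
  then have "J u - J v \<le> norm g * t - \<kappa> * t\<^sup>2"
    using strongly_convex_on_gradient_ineq[OF sconv \<open>u \<in> N\<close> \<open>v \<in> N\<close> du] unfolding t_def by linarith
  then have "4 * \<kappa> * (J u - J v) \<le> 4 * \<kappa> * (norm g * t - \<kappa> * t\<^sup>2)"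
    using \<open>0 < \<kappa>\<close> by simp
  also have "\<dots> = (norm g)\<^sup>2 - (norm g - 2 * \<kappa> * t)\<^sup>2"
    by (simp add: power2_eq_square algebra_simps)
  finally show ?thesis using zero_le_power2[of "norm g - 2 * \<kappa> * t"] by linarith
qed

section \<open>Linear convergence of descent sequences\<close>

lemma sufficient_decrease_cluster_point:
  fixes J :: "'a::metric_space \<Rightarrow> real" and G :: "'a \<Rightarrow> 'b::real_normed_vector"
  assumes "isCont J xs" "isCont G xs" "0 < c"
    and decrease: "\<And>k. J (x (Suc k)) + c * (norm (G (x k)))\<^sup>2 \<le> J (x k)"
    and r: "strict_mono r" "(x \<circ> r) \<longlonglongrightarrow> xs"
  shows "(\<lambda>k. J (x k)) \<longlonglongrightarrow> J xs" and "J xs \<le> J (x k)"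
    and "(\<lambda>k. G (x k)) \<longlonglongrightarrow> 0" and "G xs = 0"
proof -
  have J_sub: "(\<lambda>j. J (x (r j))) \<longlonglongrightarrow> J xs" and G_sub: "(\<lambda>j. G (x (r j))) \<longlonglongrightarrow> G xs"
    using isCont_tendsto_compose assms(1,2) r(2) by (fastforce simp: o_def)+
  have "J (x (Suc k)) \<le> J (x k)" for k
    using decrease[of k] \<open>0 < c\<close> zero_le_power2[of "norm (G (x k))"]
    by (smt (verit) mult_nonneg_nonneg)
  then have dec: "decseq (\<lambda>k. J (x k))" by (rule decseq_SucI)
  show J_lower: "J xs \<le> J (x k)" for k
  proof (rule LIMSEQ_le_const2[OF J_sub], intro exI allI impI)
    fix j assume "k \<le> j"
    with seq_suble[OF r(1), of j] have "k \<le> r j" by simp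
    with dec show "J (x (r j)) \<le> J (x k)" unfolding decseq_def by blast
  qed
  obtain J_inf where J_inf: "(\<lambda>k. J (x k)) \<longlonglongrightarrow> J_inf"
    using decseq_convergent[OF dec] J_lower by blast
  with LIMSEQ_unique[OF LIMSEQ_subseq_LIMSEQ[OF J_inf r(1), unfolded o_def] J_sub]
  show J_lim: "(\<lambda>k. J (x k)) \<longlonglongrightarrow> J xs" by simp
  have "(\<lambda>k. J (x (Suc k))) \<longlonglongrightarrow> J xs" using J_lim by (rule LIMSEQ_Suc)
  with J_lim have "(\<lambda>k. (J (x k) - J (x (Suc k))) / c) \<longlonglongrightarrow> (J xs - J xs) / c"
    by (intro tendsto_divide tendsto_diff tendsto_const) (use \<open>0 < c\<close> in simp_all)
  moreover have "(norm (G (x k)))\<^sup>2 \<le> (J (x k) - J (x (Suc k))) / c" for k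
    using decrease[of k] by (simp add: pos_le_divide_eq[OF \<open>0 < c\<close>] mult.commute)
  ultimately have "(\<lambda>k. (norm (G (x k)))\<^sup>2) \<longlonglongrightarrow> 0"
    using tendsto_sandwich[of "\<lambda>_. 0" "\<lambda>k. (norm (G (x k)))\<^sup>2" sequentially
        "\<lambda>k. (J (x k) - J (x (Suc k))) / c" 0] by simp
  from tendsto_real_sqrt[OF this] have "(\<lambda>k. norm (G (x k))) \<longlonglongrightarrow> 0" by simp
  then show G_lim: "(\<lambda>k. G (x k)) \<longlonglongrightarrow> 0" by (simp add: tendsto_norm_zero_iff)
  from LIMSEQ_unique[OF G_sub LIMSEQ_subseq_LIMSEQ[OF G_lim r(1), unfolded o_def]]
  show "G xs = 0" .
qed

lemma r_linear_convI_eventually: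
  assumes "0 < \<rho>" "\<rho> < 1" "\<And>k. k0 \<le> k \<Longrightarrow> norm (a k - L) \<le> C * \<rho> ^ k"
  shows "r_linear_conv a L"
proof -
  define C' where "C' = max C (Max ((\<lambda>k. norm (a k - L) / \<rho> ^ k) ` {..k0}))"
  have "norm (a k - L) \<le> C' * \<rho> ^ k" for k
  proof (cases "k0 \<le> k")
    case True
    with assms(3) have "norm (a k - L) \<le> C * \<rho> ^ k" by blast
    also have "\<dots> \<le> C' * \<rho> ^ k" using \<open>0 < \<rho>\<close> unfolding C'_def by (intro mult_right_mono) auto
    finally show ?thesis .
  next
    case False
    then have "norm (a k - L) / \<rho> ^ k \<le> C'" unfolding C'_def by (intro max.coboundedI2 Max_ge) auto
    with \<open>0 < \<rho>\<close> show ?thesis by (simp add: divide_le_eq)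
  qed
  with assms(1,2) show ?thesis unfolding r_linear_conv_def by blast
qed

lemma r_linear_convI_power2:
  assumes "0 < q" "q < 1" "\<And>k. k0 \<le> k \<Longrightarrow> (norm (a k - L))\<^sup>2 \<le> C * q ^ k"
  shows "r_linear_conv a L"
proof (rule r_linear_convI_eventually)
  show "0 < sqrt q" "sqrt q < 1" using assms(1,2) by auto
  fix k assume "k0 \<le> k"
  then have "sqrt ((norm (a k - L))\<^sup>2) \<le> sqrt (C * q ^ k)" by (intro real_sqrt_le_mono assms(3))
  then show "norm (a k - L) \<le> sqrt C * sqrt q ^ k" by (simp add: real_sqrt_mult real_sqrt_power)
qed

lemma contraction_geometric_bound:
  fixes E :: "nat \<Rightarrow> real"
  assumes "0 < q" and contraction: "\<And>k. k0 \<le> k \<Longrightarrow> E (Suc k) \<le> q * E k" and "k0 \<le> k"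
  shows "E k \<le> E k0 / q ^ k0 * q ^ k"
  using \<open>k0 \<le> k\<close>
proof (induction k rule: dec_induct)
  case base
  then show ?case using \<open>0 < q\<close> by simp
next
  case (step n)
  have "E (Suc n) \<le> q * E n" using contraction step.hyps(1) .
  also have "\<dots> \<le> q * (E k0 / q ^ k0 * q ^ n)"
    by (rule mult_left_mono[OF step.IH]) (use \<open>0 < q\<close> in simp)
  finally show ?case by (simp add: algebra_simps)
qed

text \<open>The Polyak-Lojasiewicz bound even gives the factor \<open>1 - 4 \<sigma> \<alpha> \<kappa> / b\<close>; the weaker
  factor with \<open>2\<close> is the one in the theorem.\<close>

lemma sufficient_decrease_contraction:
  fixes f0 f1 f_min g p b \<sigma> \<alpha> \<kappa> :: real
  assumes "f1 \<le> f0 - \<sigma> * \<alpha> * p" "g \<le> b * p" "4 * \<kappa> * (f0 - f_min) \<le> g"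
    and "0 < b" "0 \<le> \<sigma> * \<alpha>" "0 \<le> \<kappa>" "f_min \<le> f0"
  shows "f1 - f_min \<le> (1 - 2 * \<sigma> * \<alpha> * \<kappa> / b) * (f0 - f_min)"
proof -
  define E where "E = f0 - f_min"
  define c where "c = 2 * \<sigma> * \<alpha> * \<kappa> / b"
  have "0 \<le> 2 * \<sigma> * \<alpha>" using assms(5) by (simp add: mult.assoc)
  with assms(4,6,7) have "0 \<le> c * E" unfolding c_def E_def by simp
  have "4 * \<kappa> * E / b \<le> p"
    using assms(2,3,4) unfolding E_def by (simp add: divide_le_eq mult.commute)
  then have "\<sigma> * \<alpha> * (4 * \<kappa> * E / b) \<le> \<sigma> * \<alpha> * p" using assms(5) by (rule mult_left_mono)
  moreover have "\<sigma> * \<alpha> * (4 * \<kappa> * E / b) = 2 * (c * E)" unfolding c_def by simp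
  ultimately have "2 * (c * E) \<le> \<sigma> * \<alpha> * p" by simp
  then have "f1 - f_min \<le> E - c * E" using assms(1) \<open>0 \<le> c * E\<close> E_def by linarith
  then show ?thesis unfolding c_def E_def by (simp add: algebra_simps)
qed

lemma eventually_remains_in:
  fixes x :: "nat \<Rightarrow> 'a::real_normed_vector"
  assumes "0 < e" "ball xs e \<subseteq> N" "0 < \<kappa>"
    and growth: "\<And>v. v \<in> N \<Longrightarrow> \<kappa> * (norm (v - xs))\<^sup>2 \<le> f v"
    and f_lim: "(\<lambda>k. f (x k)) \<longlonglongrightarrow> 0"
    and step_le: "\<And>k. x k \<in> N \<Longrightarrow> norm (x (Suc k) - x k) \<le> h k" and h_lim: "h \<longlonglongrightarrow> 0"
    and r: "strict_mono r" "(x \<circ> r) \<longlonglongrightarrow> xs"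
  obtains k0 where "\<And>k. k0 \<le> k \<Longrightarrow> x k \<in> N"
proof -
  have "0 < \<kappa> * (e / 2)\<^sup>2" "0 < e / 2" using assms(1,3) by auto
  then have "\<forall>\<^sub>F k in sequentially. f (x k) < \<kappa> * (e / 2)\<^sup>2 \<and> h k < e / 2"
    using f_lim h_lim by (intro eventually_conj order_tendstoD(2))
  then obtain K where K: "\<And>k. K \<le> k \<Longrightarrow> f (x k) < \<kappa> * (e / 2)\<^sup>2 \<and> h k < e / 2"
    unfolding eventually_sequentially by blast
  have "\<forall>\<^sub>F j in sequentially. dist (x (r j)) xs < e \<and> K \<le> j"
    using r(2) \<open>0 < e\<close> eventually_ge_at_top
    by (intro eventually_conj) (auto simp: o_def tendsto_iff)
  then obtain j where j: "dist (x (r j)) xs < e" "K \<le> j"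
    unfolding eventually_sequentially by blast
  have "x k \<in> N" if "r j \<le> k" for k
    using that
  proof (induction k rule: dec_induct)
    case base
    show ?case using j(1) assms(2) by (auto simp: dist_commute)
  next
    case (step n)
    have "K \<le> n" using j(2) seq_suble[OF r(1), of j] step.hyps(1) by linarith
    with growth[OF step.IH] K[of n] have "\<kappa> * (norm (x n - xs))\<^sup>2 < \<kappa> * (e / 2)\<^sup>2" by linarith
    then have "(norm (x n - xs))\<^sup>2 < (e / 2)\<^sup>2"
      using \<open>0 < \<kappa>\<close> by (simp only: mult_less_cancel_left_pos)
    then have "norm (x n - xs) < e / 2" by (rule power2_less_imp_less) (use \<open>0 < e\<close> in simp)
    moreover have "norm (x (Suc n) - x n) < e / 2"
      using step_le[OF step.IH] K[OF \<open>K \<le> n\<close>] by linarith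
    moreover have "norm (x (Suc n) - xs) \<le> norm (x (Suc n) - x n) + norm (x n - xs)"
      using norm_triangle_ineq[of "x (Suc n) - x n" "x n - xs"] by simp
    ultimately have "norm (x (Suc n) - xs) < e" by linarith
    then show ?case using assms(2) by (auto simp: dist_norm norm_minus_commute)
  qed
  then show ?thesis using that by blast
qed

text \<open>An abstract descent method: \<open>p k\<close> stands for \<open>- G (x k) \<bullet> d k\<close> and \<open>b k\<close> for the norm of
  the operator that generates the search direction \<open>d k\<close>.\<close>

locale gradient_related_descent =
  fixes J :: "'a::real_inner \<Rightarrow> real" and G :: "'a \<Rightarrow> 'a" and x :: "nat \<Rightarrow> 'a"
    and \<sigma> :: real and \<alpha> p b :: "nat \<Rightarrow> real" and \<alpha>_min b_max M :: real
  assumes gradient: "\<And>v. (J has_derivative (\<lambda>h. G v \<bullet> h)) (at v)"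
    and sufficient_decrease: "\<And>k. J (x (Suc k)) \<le> J (x k) - \<sigma> * \<alpha> k * p k"
    and gradient_le: "\<And>k. (norm (G (x k)))\<^sup>2 \<le> b k * p k"
    and step_le: "\<And>k. norm (x (Suc k) - x k) \<le> M * \<alpha> k * norm (G (x k))"
    and \<sigma>_pos: "0 < \<sigma>" and b_pos: "\<And>k. 0 < b k" and b_le: "\<And>k. b k \<le> b_max"
    and M_nonneg: "0 \<le> M" and \<alpha>_min_pos: "0 < \<alpha>_min" and \<alpha>_min_le: "\<And>k. \<alpha>_min \<le> \<alpha> k"
begin

lemma p_nonneg: "0 \<le> p k"
proof -
  have "0 \<le> b k * p k" using gradient_le[of k] zero_le_power2 order_trans by blast
  with b_pos[of k] show ?thesis by (simp add: zero_le_mult_iff)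
qed

lemma b_max_pos: "0 < b_max"
  using b_pos[of 0] b_le[of 0] by linarith

lemma gradient_le_b_max: "(norm (G (x k)))\<^sup>2 \<le> b_max * p k"
  using gradient_le[of k] mult_right_mono[OF b_le p_nonneg] by (rule order_trans)

lemma decrease_by_gradient: "J (x (Suc k)) + \<sigma> * \<alpha>_min / b_max * (norm (G (x k)))\<^sup>2 \<le> J (x k)"
proof -
  have "\<sigma> * \<alpha>_min / b_max * (norm (G (x k)))\<^sup>2 \<le> \<sigma> * \<alpha>_min / b_max * (b_max * p k)"
    using gradient_le_b_max \<sigma>_pos \<alpha>_min_pos b_max_pos by (intro mult_left_mono) auto
  also have "\<dots> \<le> \<sigma> * \<alpha> k * p k"
    using \<alpha>_min_le[of k] \<sigma>_pos p_nonneg[of k] b_max_pos by (simp add: mult_right_mono)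
  finally show ?thesis using sufficient_decrease[of k] by linarith
qed

lemma contraction_factor_le:
  assumes "0 \<le> \<kappa>"
  shows "1 - 2 * \<sigma> * \<alpha> k * \<kappa> / b k \<le> 1 - 2 * \<sigma> * \<alpha>_min * \<kappa> / b_max"
proof -
  have "\<alpha>_min / b_max \<le> \<alpha> k / b k"
    using \<alpha>_min_pos \<alpha>_min_le b_pos b_le by (intro frac_le) (auto intro: order_trans[of 0 \<alpha>_min])
  then have "2 * \<sigma> * \<kappa> * (\<alpha>_min / b_max) \<le> 2 * \<sigma> * \<kappa> * (\<alpha> k / b k)"
    using \<sigma>_pos assms by (intro mult_left_mono) auto
  then show ?thesis by (simp add: algebra_simps)
qed

end

locale descent_near_strong_minimizer = gradient_related_descent +
  fixes xs :: "'a::real_inner" and N :: "'a set" and \<kappa> L :: real and r :: "nat \<Rightarrow> nat"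
  assumes cluster: "strict_mono r" "(x \<circ> r) \<longlonglongrightarrow> xs"
    and G_continuous: "isCont G xs"
    and neighbourhood: "xs \<in> interior N" and \<kappa>_pos: "0 < \<kappa>"
    and strongly_convex: "strongly_convex_on N J \<kappa>"
    and lipschitz: "\<And>u v. u \<in> N \<Longrightarrow> v \<in> N \<Longrightarrow> norm (G u - G v) \<le> L * norm (u - v)"
begin

lemma xs_in_N: "xs \<in> N"
  using neighbourhood interior_subset by blast

lemma
  shows J_tendsto: "(\<lambda>k. J (x k)) \<longlonglongrightarrow> J xs" and J_xs_le: "J xs \<le> J (x k)"
    and G_tendsto: "(\<lambda>k. G (x k)) \<longlonglongrightarrow> 0" and G_xs: "G xs = 0"
  using sufficient_decrease_cluster_point[OF has_derivative_continuous[OF gradient] G_continuous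
      _ decrease_by_gradient cluster] \<sigma>_pos \<alpha>_min_pos b_max_pos
  by auto

lemma quadratic_growth: "v \<in> N \<Longrightarrow> J xs + \<kappa> * (norm (v - xs))\<^sup>2 \<le> J v"
  using strongly_convex_on_gradient_ineq[OF strongly_convex xs_in_N, of v 0] gradient[of xs] G_xs
  by simp

lemma contraction:
  assumes "x k \<in> N"
  shows "J (x (Suc k)) - J xs \<le> (1 - 2 * \<sigma> * \<alpha> k * \<kappa> / b k) * (J (x k) - J xs)"
  using sufficient_decrease_contraction[OF sufficient_decrease gradient_le
      strongly_convex_on_gradient_dominance[OF strongly_convex assms xs_in_N \<kappa>_pos gradient]
      b_pos] \<sigma>_pos \<alpha>_min_le[of k] \<alpha>_min_pos \<kappa>_pos J_xs_le
  by simp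

lemma SUP_contraction_factor_less_1: "(SUP k. 1 - 2 * \<sigma> * \<alpha> k * \<kappa> / b k) < 1"
proof -
  have "(SUP k. 1 - 2 * \<sigma> * \<alpha> k * \<kappa> / b k) \<le> 1 - 2 * \<sigma> * \<alpha>_min * \<kappa> / b_max"
    using contraction_factor_le \<kappa>_pos by (intro cSUP_least) auto
  also have "\<dots> < 1" using \<sigma>_pos \<alpha>_min_pos \<kappa>_pos b_max_pos by simp
  finally show ?thesis .
qed

text \<open>Near \<open>xs\<close> the step length is bounded, because the decrease it produces cannot exceed
  the gap \<open>J (x k) - J xs\<close>, which strong convexity bounds by \<open>\<parallel>G (x k)\<parallel>\<^sup>2 / (4 \<kappa>)\<close>.\<close>

lemma step_le_gradient:
  assumes "x k \<in> N"
  shows "norm (x (Suc k) - x k) \<le> M * b_max / (4 * \<kappa> * \<sigma>) * norm (G (x k))"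
proof (cases "G (x k) = 0")
  case True
  with step_le[of k] show ?thesis by simp
next
  case False
  have "\<sigma> * \<alpha> k * ((norm (G (x k)))\<^sup>2 / b_max) \<le> \<sigma> * \<alpha> k * p k"
    using gradient_le_b_max[of k] b_max_pos \<sigma>_pos \<alpha>_min_le[of k] \<alpha>_min_pos
    by (intro mult_left_mono) (auto simp: divide_le_eq mult.commute)
  also have "\<dots> \<le> J (x k) - J xs" using sufficient_decrease[of k] J_xs_le[of "Suc k"] by linarith
  also have "\<dots> \<le> (norm (G (x k)))\<^sup>2 / (4 * \<kappa>)"
    using strongly_convex_on_gradient_dominance[OF strongly_convex assms xs_in_N \<kappa>_pos gradient]
      \<kappa>_pos
    by (simp add: le_divide_eq mult.commute)
  finally have "\<alpha> k \<le> b_max / (4 * \<kappa> * \<sigma>)"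
    using False \<sigma>_pos \<kappa>_pos b_max_pos by (simp add: field_simps)
  then have "M * \<alpha> k * norm (G (x k)) \<le> M * (b_max / (4 * \<kappa> * \<sigma>)) * norm (G (x k))"
    using M_nonneg by (intro mult_right_mono mult_left_mono) auto
  with step_le[of k] show ?thesis by simp
qed

lemma eventually_in_N: obtains k0 where "\<And>k. k0 \<le> k \<Longrightarrow> x k \<in> N"
proof -
  obtain e where e: "0 < e" "ball xs e \<subseteq> N" using neighbourhood mem_interior by blast
  have growth: "\<kappa> * (norm (v - xs))\<^sup>2 \<le> J v - J xs" if "v \<in> N" for v
    using quadratic_growth[OF that] by linarith
  have "(\<lambda>k. J (x k) - J xs) \<longlonglongrightarrow> 0" using J_tendsto by (simp add: LIM_zero)
  moreover have "(\<lambda>k. M * b_max / (4 * \<kappa> * \<sigma>) * norm (G (x k))) \<longlonglongrightarrow> 0"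
    by (intro tendsto_mult_right_zero tendsto_norm_zero G_tendsto)
  ultimately show ?thesis
    using eventually_remains_in[OF e \<kappa>_pos growth _ step_le_gradient _ cluster] that by blast
qed

lemma eventually_linear_contraction:
  obtains q k0 where "0 < q" "q < 1" "\<And>k. k0 \<le> k \<Longrightarrow> x k \<in> N"
    and "\<And>k. k0 \<le> k \<Longrightarrow> J (x (Suc k)) - J xs \<le> q * (J (x k) - J xs)"
proof -
  obtain k0 where in_N: "\<And>k. k0 \<le> k \<Longrightarrow> x k \<in> N" using eventually_in_N by blast
  define q where "q = max (1 / 2) (1 - 2 * \<sigma> * \<alpha>_min * \<kappa> / b_max)"
  have "0 < q" "q < 1" unfolding q_def using \<sigma>_pos \<alpha>_min_pos \<kappa>_pos b_max_pos by auto
  have contracts: "J (x (Suc k)) - J xs \<le> q * (J (x k) - J xs)" if "k0 \<le> k" for k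
  proof -
    have "1 - 2 * \<sigma> * \<alpha> k * \<kappa> / b k \<le> q"
      using contraction_factor_le[of \<kappa> k] \<kappa>_pos unfolding q_def by simp
    then have "(1 - 2 * \<sigma> * \<alpha> k * \<kappa> / b k) * (J (x k) - J xs) \<le> q * (J (x k) - J xs)"
      by (rule mult_right_mono) (use J_xs_le[of k] in simp)
    with contraction[OF in_N[OF that]] show ?thesis by linarith
  qed
  from \<open>0 < q\<close> \<open>q < 1\<close> in_N contracts show ?thesis by (rule that)
qed

lemma q_linear_conv_values: "q_linear_conv (\<lambda>k. J (x k)) (J xs)"
proof -
  obtain q k0 where "0 < q" "q < 1" "\<And>k. k0 \<le> k \<Longrightarrow> x k \<in> N"
    and contracts: "\<And>k. k0 \<le> k \<Longrightarrow> J (x (Suc k)) - J xs \<le> q * (J (x k) - J xs)"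
    using eventually_linear_contraction by metis
  have abs_contracts: "\<bar>J (x (Suc k)) - J xs\<bar> \<le> q * \<bar>J (x k) - J xs\<bar>" if "k0 \<le> k" for k
    using contracts[OF that] J_xs_le[of k] J_xs_le[of "Suc k"]
    by (simp only: abs_of_nonneg diff_ge_0_iff_ge)
  show ?thesis unfolding q_linear_conv_def
    by (intro exI[of _ q] exI[of _ k0]) (use \<open>0 < q\<close> \<open>q < 1\<close> abs_contracts in auto)
qed

lemma iterates_dist_sq_geometric:
  obtains q k0 C where "0 < q" "q < 1"
    and "\<And>k. k0 \<le> k \<Longrightarrow> x k \<in> N \<and> (norm (x k - xs))\<^sup>2 \<le> C * q ^ k"
proof -
  obtain q k0 where q: "0 < q" "q < 1" and in_N: "\<And>k. k0 \<le> k \<Longrightarrow> x k \<in> N"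
    and contracts: "\<And>k. k0 \<le> k \<Longrightarrow> J (x (Suc k)) - J xs \<le> q * (J (x k) - J xs)"
    using eventually_linear_contraction by metis
  define C where "C = (J (x k0) - J xs) / q ^ k0 / \<kappa>"
  have "x k \<in> N \<and> (norm (x k - xs))\<^sup>2 \<le> C * q ^ k" if "k0 \<le> k" for k
  proof -
    have "\<kappa> * (norm (x k - xs))\<^sup>2 \<le> J (x k) - J xs"
      using quadratic_growth[OF in_N[OF that]] by linarith
    also have "\<dots> \<le> (J (x k0) - J xs) / q ^ k0 * q ^ k"
      using contraction_geometric_bound[of q k0 "\<lambda>k. J (x k) - J xs", OF q(1) contracts that] .
    finally have "\<kappa> * (norm (x k - xs))\<^sup>2 \<le> \<kappa> * (C * q ^ k)"
      unfolding C_def using \<kappa>_pos by simp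
    with in_N[OF that] show ?thesis using \<kappa>_pos by (simp only: mult_le_cancel_left_pos)
  qed
  with q show ?thesis by (rule that)
qed

lemma r_linear_conv_iterates: "r_linear_conv x xs"
proof -
  obtain q k0 C where q: "0 < q" "q < 1"
    and close: "\<And>k. k0 \<le> k \<Longrightarrow> x k \<in> N \<and> (norm (x k - xs))\<^sup>2 \<le> C * q ^ k"
    using iterates_dist_sq_geometric by metis
  show ?thesis by (rule r_linear_convI_power2[OF q]) (use close in blast)
qed

lemma r_linear_conv_gradients: "r_linear_conv (\<lambda>k. G (x k)) 0"
proof -
  obtain q k0 C where q: "0 < q" "q < 1"
    and close: "\<And>k. k0 \<le> k \<Longrightarrow> x k \<in> N \<and> (norm (x k - xs))\<^sup>2 \<le> C * q ^ k"
    using iterates_dist_sq_geometric by metis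
  have "(norm (G (x k) - 0))\<^sup>2 \<le> L\<^sup>2 * C * q ^ k" if "k0 \<le> k" for k
  proof -
    have "norm (G (x k) - 0) \<le> L * norm (x k - xs)"
      using lipschitz[of "x k" xs] close[OF that] xs_in_N G_xs by simp
    then have "(norm (G (x k) - 0))\<^sup>2 \<le> (L * norm (x k - xs))\<^sup>2"
      by (rule power_mono) simp
    also have "\<dots> = L\<^sup>2 * (norm (x k - xs))\<^sup>2" by (rule power_mult_distrib)
    also have "\<dots> \<le> L\<^sup>2 * (C * q ^ k)"
      using close[OF that] by (intro mult_left_mono) simp_all
    finally show ?thesis by (simp add: mult.assoc)
  qed
  with q show ?thesis by (rule r_linear_convI_power2)
qed

theorem local_linear_convergence:
  "(\<forall>v\<in>N. J xs + \<kappa> * (norm (v - xs))\<^sup>2 \<le> J v)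
   \<and> r_linear_conv x xs \<and> r_linear_conv (\<lambda>k. G (x k)) 0 \<and> q_linear_conv (\<lambda>k. J (x k)) (J xs)
   \<and> (\<forall>k. x k \<in> N \<longrightarrow>
        J (x (Suc k)) - J xs \<le> (1 - 2 * \<sigma> * \<alpha> k * \<kappa> / b k) * (J (x k) - J xs))
   \<and> (SUP k. 1 - 2 * \<sigma> * \<alpha> k * \<kappa> / b k) < 1"
  by (intro conjI ballI allI impI quadratic_growth contraction r_linear_conv_iterates
      r_linear_conv_gradients q_linear_conv_values SUP_contraction_factor_less_1)

end

section \<open>The SLBFGS iteration\<close>

lemma Pproj_nonneg:
  assumes "0 \<le> wl" "0 \<le> wu"
  shows "0 \<le> Pproj wl wu t"
  using assms unfolding Pproj_def by (cases wu) (auto simp: min_def max_def)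

lemma tau_rule_nonneg:
  assumes "tau_rule G x S c0 C0 c1 c2 use_g k t" "0 \<le> c0" "0 < c1"
  shows "0 \<le> t"
proof -
  define w where "w = c1 * norm (G (x (Suc k))) powr c2"
  have "0 \<le> min c0 w" "0 \<le> max C0 (ereal (inverse w))"
    using assms(2,3) unfolding w_def by (auto simp: le_max_iff_disj)
  moreover obtain r where "Pproj (min c0 w) (max C0 (ereal (inverse w))) r \<le> t"
    using assms(1) unfolding tau_rule_def Let_def w_def by (auto split: if_splits)
  ultimately show ?thesis using Pproj_nonneg order_trans by blast
qed

lemma slbfgs_run_tau_nonneg:
  assumes "slbfgs_run J G x0 l c0 C0 cs c1 c2 use_g S \<tau> Binv \<alpha> x"
  shows "0 \<le> \<tau> k"
proof (cases k)
  case 0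
  with assms show ?thesis unfolding slbfgs_run_def by simp
next
  case (Suc j)
  with assms tau_rule_nonneg[of G x S c0 C0 c1 c2 use_g j "\<tau> (Suc j)"] show ?thesis
    unfolding slbfgs_run_def by auto
qed

lemma slbfgs_run_sym_psd:
  assumes "slbfgs_run J G x0 l c0 C0 cs c1 c2 use_g S \<tau> Binv \<alpha> x"
  shows "sym_psd (Bop G x l cs S \<tau> k)"
proof (rule sym_psd_Bop)
  show "0 \<le> \<tau> k" by (rule slbfgs_run_tau_nonneg[OF assms])
qed (use assms in \<open>auto simp: slbfgs_run_def\<close>)

text \<open>The run never stops, so \<open>G (x (Suc k)) \<noteq> 0\<close>; and \<open>G (x 0) = 0\<close> would give
  \<open>x 1 = x 0\<close>.\<close>

lemma slbfgs_run_gradient_nonzero: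
  assumes "slbfgs_run J G x0 l c0 C0 cs c1 c2 use_g S \<tau> Binv \<alpha> x"
  shows "G (x k) \<noteq> 0"
proof (cases k)
  case 0
  from assms have "x (Suc 0) = x 0 + \<alpha> 0 *\<^sub>R (- Binv 0 (G (x 0)))" "0 < norm (G (x (Suc 0)))"
    unfolding slbfgs_run_def by blast+
  with 0 show ?thesis by auto
next
  case (Suc j)
  with assms show ?thesis unfolding slbfgs_run_def by force
qed

lemma slbfgs_run_direction:
  fixes k :: nat
  assumes run: "slbfgs_run J G x0 l c0 C0 cs c1 c2 use_g S \<tau> Binv \<alpha> x"
  defines "B \<equiv> Bop G x l cs S \<tau> k" and "g \<equiv> G (x k)"
  shows "(norm g)\<^sup>2 \<le> norm B * (g \<bullet> Binv k g)" and "0 < g \<bullet> Binv k g" and "0 < norm B"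
proof -
  have "\<And>v. B (Binv k v) = v" using run unfolding slbfgs_run_def B_def by blast
  with slbfgs_run_sym_psd[OF run] show "(norm g)\<^sup>2 \<le> norm B * (g \<bullet> Binv k g)"
    unfolding B_def by (rule sym_psd_inverse_gradient_bound)
  moreover have "0 < (norm g)\<^sup>2" using slbfgs_run_gradient_nonzero[OF run] unfolding g_def by simp
  ultimately have "0 < norm B * (g \<bullet> Binv k g)" by linarith
  then show "0 < g \<bullet> Binv k g" "0 < norm B" by (simp_all add: zero_less_mult_iff)
qed

lemma slbfgs_run_armijo_decrease:
  assumes run: "slbfgs_run J G x0 l c0 C0 cs c1 c2 use_g S \<tau> Binv \<alpha> x"
    and armijo: "\<And>k. armijo J G x (\<lambda>k. - Binv k (G (x k))) \<sigma> k (\<alpha> k)" and "0 \<le> \<sigma>"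
  shows "J (x (Suc k)) \<le> J (x k) - \<sigma> * \<alpha> k * (G (x k) \<bullet> Binv k (G (x k)))"
    and "J (x k) \<le> J x0"
proof -
  have x0: "x 0 = x0" and \<alpha>_pos: "\<And>k. 0 < \<alpha> k"
    and iteration: "\<And>k. x (Suc k) = x k + \<alpha> k *\<^sub>R - Binv k (G (x k))"
    using run unfolding slbfgs_run_def by auto
  show decrease: "J (x (Suc k)) \<le> J (x k) - \<sigma> * \<alpha> k * (G (x k) \<bullet> Binv k (G (x k)))" for k
    using armijo[of k] unfolding armijo_def iteration by (simp add: algebra_simps)
  show "J (x k) \<le> J x0"
  proof (induction k)
    case (Suc k)
    have "0 \<le> \<sigma> * \<alpha> k * (G (x k) \<bullet> Binv k (G (x k)))"
      using \<open>0 \<le> \<sigma>\<close> \<alpha>_pos[of k] slbfgs_run_direction(2)[OF run, of k] by simp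
    with decrease[of k] Suc show ?case by linarith
  qed (simp add: x0)
qed

lemma slbfgs_run_gradient_related_descent:
  fixes J :: "'a::{real_inner,complete_space} \<Rightarrow> real"
  assumes run: "slbfgs_run J G x0 l c0 C0 cs c1 c2 use_g S \<tau> Binv \<alpha> x"
    and gradient: "\<And>v. (J has_derivative (\<lambda>h. G v \<bullet> h)) (at v)"
    and lip: "\<exists>L>0. \<forall>u\<in>{v. J v \<le> J x0}. \<forall>v\<in>{v. J v \<le> J x0}.
                norm (G u - G v) \<le> L * norm (u - v)"
    and \<sigma>: "0 < \<sigma>" "\<sigma> < 1"
    and line_search:
      "(0 < \<beta> \<and> \<beta> < 1 \<and> (\<forall>k. armijo_backtracking J G x (\<lambda>k. - Binv k (G (x k))) \<sigma> \<beta> \<alpha> k))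
     \<or> (\<sigma> < \<eta> \<and> \<eta> < 1 \<and> (\<forall>k. wolfe_powell J G x (\<lambda>k. - Binv k (G (x k))) \<sigma> \<eta> \<alpha> k))"
    and "bounded (range (Bop G x l cs S \<tau>))" "bounded (range Binv)"
  obtains \<alpha>_min b_max M where "gradient_related_descent J G x \<sigma> \<alpha>
    (\<lambda>k. G (x k) \<bullet> Binv k (G (x k))) (\<lambda>k. norm (Bop G x l cs S \<tau> k)) \<alpha>_min b_max M"
proof -
  define d where "d = (\<lambda>k. - Binv k (G (x k)))"
  define B where "B = Bop G x l cs S \<tau>"
  note direction = slbfgs_run_direction[OF run, folded B_def]
  obtain b_max M where "0 < b_max" "0 < M"
    and b_max: "\<And>k. norm (B k) \<le> b_max" and M: "\<And>k. norm (Binv k) \<le> M"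
    using \<open>bounded (range Binv)\<close> \<open>bounded (range (Bop G x l cs S \<tau>))\<close>
    unfolding bounded_pos B_def by auto
  obtain L where "0 < L" and lip_L: "\<And>u v. J u \<le> J x0 \<Longrightarrow> J v \<le> J x0 \<Longrightarrow>
      norm (G u - G v) \<le> L * norm (u - v)"
    using lip by auto
  have "armijo J G x d \<sigma> k (\<alpha> k)" for k
    using line_search unfolding armijo_backtracking_def wolfe_powell_def d_def by metis
  note armijo_decrease =
    slbfgs_run_armijo_decrease[OF run this[unfolded d_def] less_imp_le[OF \<sigma>(1)]]
  have d_le: "norm (d k) \<le> M * norm (G (x k))" for k
    unfolding d_def using norm_blinfun[of "Binv k" "G (x k)"] M[of k]
    by (simp add: mult_right_mono order_trans)
  have related: "(norm (d k))\<^sup>2 \<le> M\<^sup>2 * b_max * - (G (x k) \<bullet> d k)" for k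
  proof -
    have "(norm (d k))\<^sup>2 \<le> M\<^sup>2 * (norm (G (x k)))\<^sup>2"
      using power_mono[OF d_le[of k] norm_ge_zero] by (simp add: power_mult_distrib)
    also have "\<dots> \<le> M\<^sup>2 * b_max * (G (x k) \<bullet> Binv k (G (x k)))"
      using direction(1)[of k] mult_right_mono[OF b_max[of k] less_imp_le[OF direction(2)[of k]]]
      by (simp add: mult.assoc mult_left_mono)
    finally show ?thesis unfolding d_def by simp
  qed
  have iteration: "\<And>k. x (Suc k) = x k + \<alpha> k *\<^sub>R d k" and \<alpha>_pos: "\<And>k. 0 < \<alpha> k"
    using run unfolding slbfgs_run_def d_def by auto
  obtain \<alpha>_min where "0 < \<alpha>_min" "\<And>k. \<alpha>_min \<le> \<alpha> k"
  proof (rule line_search_step_lower_bound[where J = J and G = G and x = x and d = d and \<alpha> = \<alpha>,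
        OF gradient lip_L armijo_decrease(2) \<open>0 < L\<close> _ \<sigma> iteration \<alpha>_pos _ related])
    show "0 < M\<^sup>2 * b_max" using \<open>0 < M\<close> \<open>0 < b_max\<close> by simp
    show "0 < - (G (x k) \<bullet> d k)" for k using direction(2)[of k] unfolding d_def by simp
  qed (use line_search in \<open>simp_all add: d_def\<close>)
  show ?thesis
  proof (rule that[of \<alpha>_min b_max M], unfold_locales)
    show "norm (x (Suc k) - x k) \<le> M * \<alpha> k * norm (G (x k))" for k
      using iteration[of k] \<alpha>_pos[of k] mult_left_mono[OF d_le[of k], of "\<alpha> k"]
      by (simp add: mult_ac)
  qed (use gradient \<sigma> direction(1,3) armijo_decrease(1) b_max \<open>0 < M\<close> \<open>0 < \<alpha>_min\<close>
      \<open>\<And>k. \<alpha>_min \<le> \<alpha> k\<close> in \<open>auto simp: B_def\<close>)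
qed

theorem theorem4p15:
  fixes J :: "'a::{real_inner,complete_space} \<Rightarrow> real"
    and G :: "'a \<Rightarrow> 'a"
    and x0 :: 'a and l :: nat and c0 :: real and C0 :: ereal
    and cs c1 c2 :: real and use_g :: bool
    and S :: "nat \<Rightarrow> ('a \<Rightarrow>\<^sub>L 'a)" and \<tau> :: "nat \<Rightarrow> real"
    and Binv :: "nat \<Rightarrow> ('a \<Rightarrow>\<^sub>L 'a)" and \<alpha> :: "nat \<Rightarrow> real" and x :: "nat \<Rightarrow> 'a"
    and \<sigma> \<beta> \<eta> \<kappa> :: real and N :: "'a set" and xs :: 'a
  defines "\<Omega> \<equiv> {v. J v \<le> J x0}"
  defines "d \<equiv> (\<lambda>k. - Binv k (G (x k)))"
  defines "B \<equiv> Bop G x l cs S \<tau>"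
  assumes run: "slbfgs_run J G x0 l c0 C0 cs c1 c2 use_g S \<tau> Binv \<alpha> x"
    \<comment> \<open>1) J continuously differentiable with gradient G, bounded below\<close>
    and grad: "\<And>v. (J has_derivative (\<lambda>h. G v \<bullet> h)) (at v)"
    and grad_cont: "continuous_on UNIV G"
    and bdd: "bdd_below (range J)"
    \<comment> \<open>2) gradient Lipschitz on Omega\<close>
    and lip: "\<exists>L>0. \<forall>u\<in>\<Omega>. \<forall>v\<in>\<Omega>. norm (G u - G v) \<le> L * norm (u - v)"
    \<comment> \<open>3) bounded S_k\<close>
    and S_bdd: "bounded (range S)"
    \<comment> \<open>4) line search: Armijo backtracking throughout, or Wolfe-Powell throughout\<close>
    and sigma: "0 < \<sigma>" "\<sigma> < 1"
    and ls: "(0 < \<beta> \<and> \<beta> < 1 \<and> (\<forall>k. armijo_backtracking J G x d \<sigma> \<beta> \<alpha> k))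
           \<or> (\<sigma> < \<eta> \<and> \<eta> < 1 \<and> (\<forall>k. wolfe_powell J G x d \<sigma> \<eta> \<alpha> k))"
    \<comment> \<open>5) c0 = 0 only if the inverses of B_k^(0) are uniformly bounded\<close>
    and c0_zero: "c0 = 0 \<longrightarrow> (\<exists>M. \<forall>k. \<exists>A :: ('a \<Rightarrow>\<^sub>L 'a).
                      (\<forall>v. blinfun_apply A (B0 S \<tau> k v) = v \<and> B0 S \<tau> k (blinfun_apply A v) = v) \<and> norm A \<le> M)"
    \<comment> \<open>6) C0 = infinity only if tau^g variant, or C^2 with averaged Hessian condition\<close>
    and C0_inf: "C0 = \<infinity> \<longrightarrow> use_g \<or>
                   (\<exists>H :: 'a \<Rightarrow> ('a \<Rightarrow>\<^sub>L 'a).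
                      (\<forall>v. (G has_derivative blinfun_apply (H v)) (at v)) \<and> continuous_on UNIV H \<and>
                      (\<forall>k. sym_psd (integral {0..1} (\<lambda>t. H (x k + t *\<^sub>R step_s x k)) - S (Suc k))) \<and>
                      bounded (range (\<lambda>k. integral {0..1} (\<lambda>t. H (x k + t *\<^sub>R step_s x k)) - S (Suc k))))"
    \<comment> \<open>8) bounded B_k and B_k^{-1}\<close>
    and B_bdd: "bounded (range B)"
    and Binv_bdd: "bounded (range Binv)"
    \<comment> \<open>cluster point with local strong convexity on a convex neighbourhood\<close>
    and cluster: "\<exists>r. strict_mono r \<and> (x \<circ> r) \<longlonglongrightarrow> xs"
    and N_nhd: "xs \<in> interior N" and N_sub: "N \<subseteq> \<Omega>"
    and kappa: "\<kappa> > 0"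
    and sconv: "strongly_convex_on N J \<kappa>"
  shows "(\<forall>v\<in>N. J xs + \<kappa> * (norm (v - xs))\<^sup>2 \<le> J v)
       \<and> r_linear_conv x xs
       \<and> r_linear_conv (\<lambda>k. G (x k)) 0
       \<and> q_linear_conv (\<lambda>k. J (x k)) (J xs)
       \<and> (\<forall>kb. (\<forall>k\<ge>kb. x k \<in> N) \<longrightarrow>
            (\<forall>k\<ge>kb. J (x (Suc k)) - J xs
                      \<le> (1 - 2 * \<sigma> * \<alpha> k * \<kappa> / norm (B k)) * (J (x k) - J xs))
            \<and> (SUP k. 1 - 2 * \<sigma> * \<alpha> k * \<kappa> / norm (B k)) < 1)"
proof -
  obtain r where r: "strict_mono r" "(x \<circ> r) \<longlonglongrightarrow> xs" using cluster by blast
  obtain \<alpha>_min b_max M where "gradient_related_descent J G x \<sigma> \<alpha>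
      (\<lambda>k. G (x k) \<bullet> Binv k (G (x k))) (\<lambda>k. norm (B k)) \<alpha>_min b_max M"
    using slbfgs_run_gradient_related_descent[OF run grad lip[unfolded \<Omega>_def] sigma
        ls[unfolded d_def] B_bdd[unfolded B_def] Binv_bdd]
    unfolding B_def by blast
  moreover obtain L where "\<forall>u\<in>\<Omega>. \<forall>v\<in>\<Omega>. norm (G u - G v) \<le> L * norm (u - v)"
    using lip by blast
  ultimately interpret descent_near_strong_minimizer J G x \<sigma> \<alpha>
      "\<lambda>k. G (x k) \<bullet> Binv k (G (x k))" "\<lambda>k. norm (B k)" \<alpha>_min b_max M xs N \<kappa> L r
    using r grad_cont N_nhd N_sub kappa sconv
    by (intro descent_near_strong_minimizer.intro descent_near_strong_minimizer_axioms.intro)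
       (auto simp: continuous_on_eq_continuous_at)
  from local_linear_convergence show ?thesis by blast
qed

end
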